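(* Let $W$ be a channel from $\{1,\dots,m\}$ to $\{1,\dots,n\}$ and let $s$ be the number of distinct values among the entries $W_{i,j}$. Then every $\lambda\in\Lambda(W)$ satisfies \[ \mathrm{w}(\lambda)\ge \max\big(\lceil\log_2 s\rceil,\ \mathrm{w}(W_{1,*}),\dots,\mathrm{w}(W_{m,*})\big). \]
   Context: A channel is a row-stochastic matrix; $\mathcal{D}$ is the set of deterministic (0-1) channels from $\{1,\dots,m\}$ to $\{1,\dots,n\}$. $\Lambda(W)=\{\lambda\text{ probability distribution on }\mathcal{D}: W=\sum_D\lambda_DD\}$. $\mathrm{w}(x)$ is the number of nonzero entries of a vector $x$ (for $\lambda$, the size of its support); $W_{i,*}$ is the $i$-th row of $W$. *)

theory Defs
  imports Complex_Main
begin

definition channel :: "('m::finite \<Rightarrow> 'n::finite \<Rightarrow> real) \<Rightarrow> bool" where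
  "channel W \<longleftrightarrow> (\<forall>i j. W i j \<ge> 0) \<and> (\<forall>i. (\<Sum>j\<in>UNIV. W i j) = 1)"

definition det_channels :: "('m::finite \<Rightarrow> 'n::finite \<Rightarrow> real) set" where
  "det_channels = {D. channel D \<and> (\<forall>i j. D i j = 0 \<or> D i j = 1)}"

definition Lambda :: "('m::finite \<Rightarrow> 'n::finite \<Rightarrow> real)
    \<Rightarrow> (('m \<Rightarrow> 'n \<Rightarrow> real) \<Rightarrow> real) set" where
  "Lambda W = {lam. (\<forall>D. lam D \<ge> 0) \<and> (\<forall>D. D \<notin> det_channels \<longrightarrow> lam D = 0)
      \<and> (\<Sum>D\<in>det_channels. lam D) = 1
      \<and> W = (\<lambda>i j. \<Sum>D\<in>det_channels. lam D * D i j)}"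

definition wt_dist :: "(('m \<Rightarrow> 'n \<Rightarrow> real) \<Rightarrow> real) \<Rightarrow> nat" where
  "wt_dist lam = card {D. lam D \<noteq> 0}"

definition wt_vec :: "('n::finite \<Rightarrow> real) \<Rightarrow> nat" where
  "wt_vec x = card {j. x j \<noteq> 0}"

end

theory Submission
  imports Defs "HOL-Library.FuncSet"
begin

text \<open>Write \<open>S\<close> for the support of \<open>\<lambda>\<close>. Every entry of \<open>W\<close> is the \<open>\<lambda>\<close>-mass of those \<open>D \<in> S\<close>
  with \<open>D i j = 1\<close>, i.e. a subset sum over \<open>S\<close>; so \<open>W\<close> has at most \<open>2 ^ |S|\<close> distinct entries.
  Each deterministic channel has a single \<open>1\<close> in row \<open>i\<close>, so \<open>W i j \<noteq> 0\<close> requires some \<open>D \<in> S\<close>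
  sending \<open>i\<close> to \<open>j\<close>, and row \<open>i\<close> of \<open>W\<close> has at most \<open>|S|\<close> nonzero entries.\<close>

lemma finite_det_channels: "finite (det_channels :: ('m::finite \<Rightarrow> 'n::finite \<Rightarrow> real) set)"
proof (rule finite_subset)
  show "det_channels \<subseteq> PiE (UNIV::'m set) (\<lambda>_. PiE (UNIV::'n set) (\<lambda>_. {0::real,1}))"
    unfolding det_channels_def by (auto simp: PiE_UNIV_domain)
  show "finite (PiE (UNIV::'m set) (\<lambda>_. PiE (UNIV::'n set) (\<lambda>_. {0::real,1})))"
    by (intro finite_PiE) auto
qed

lemma det_channel_entry_cases:
  assumes "D \<in> det_channels"
  shows "D i j = 0 \<or> D i j = 1"
  using assms unfolding det_channels_def by auto

lemma det_channel_row_unique: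
  assumes "D \<in> det_channels" and "D i j = 1" and "D i j' = 1"
  shows "j' = j"
proof (rule ccontr)
  assume "j' \<noteq> j"
  have "channel D" using assms(1) unfolding det_channels_def by auto
  hence nonneg: "\<And>b. D i b \<ge> 0" and row_sum: "(\<Sum>b\<in>UNIV. D i b) = 1"
    unfolding channel_def by auto
  have "(2::real) = (\<Sum>b\<in>{j,j'}. D i b)" using assms(2,3) \<open>j' \<noteq> j\<close> by simp
  also have "\<dots> \<le> (\<Sum>b\<in>UNIV. D i b)" by (rule sum_mono2) (auto simp: nonneg)
  finally show False using row_sum by simp
qed

lemma Lambda_support_subset:
  assumes "lam \<in> Lambda W"
  shows "{D. lam D \<noteq> 0} \<subseteq> det_channels"
  using assms unfolding Lambda_def by auto

lemma finite_Lambda_support: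
  assumes "lam \<in> Lambda W"
  shows "finite {D. lam D \<noteq> 0}"
  using finite_subset[OF Lambda_support_subset[OF assms] finite_det_channels] .

lemma Lambda_entry_eq_support_sum:
  assumes "lam \<in> Lambda W"
  shows "W i j = sum lam {D \<in> {D. lam D \<noteq> 0}. D i j = 1}"
proof -
  define S where "S = {D. lam D \<noteq> 0}"
  have S_sub: "S \<subseteq> det_channels" using Lambda_support_subset[OF assms] by (simp add: S_def)
  have "W i j = (\<Sum>D\<in>det_channels. lam D * D i j)"
    using assms unfolding Lambda_def by auto
  also have "\<dots> = (\<Sum>D\<in>S. lam D * D i j)"
    by (rule sum.mono_neutral_right[OF finite_det_channels S_sub]) (auto simp: S_def)
  also have "\<dots> = (\<Sum>D\<in>S. if D i j = 1 then lam D else 0)"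
    using S_sub det_channel_entry_cases by (intro sum.cong) fastforce+
  also have "\<dots> = sum lam {D \<in> S. D i j = 1}"
    using finite_Lambda_support[OF assms] unfolding S_def[symmetric] by (simp add: sum.inter_filter)
  finally show ?thesis by (simp add: S_def)
qed

lemma card_le_two_pow_if_subset_image_Pow:
  assumes "finite S" and "A \<subseteq> f ` Pow S"
  shows "card A \<le> 2 ^ card S"
proof -
  have "card A \<le> card (f ` Pow S)" using assms by (intro card_mono) auto
  also have "\<dots> \<le> card (Pow S)" using assms(1) by (intro card_image_le) simp
  finally show ?thesis using assms(1) by (simp add: card_Pow)
qed

lemma nat_ceiling_log2_le:
  assumes "0 < k" and "k \<le> 2 ^ n"
  shows "nat \<lceil>log 2 (real k)\<rceil> \<le> n"
proof -
  have "log 2 (real k) \<le> log 2 (2 ^ n)"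
    using assms by (subst log_le_cancel_iff) (auto simp flip: of_nat_power)
  hence "log 2 (real k) \<le> real n" by (simp add: log_nat_power)
  thus ?thesis by linarith
qed

lemma card_values_le_two_pow_wt_dist:
  assumes "lam \<in> Lambda W"
  shows "card {W i j | i j. True} \<le> 2 ^ wt_dist lam"
proof -
  note finite_Lambda_support[OF assms]
  moreover have "{W i j | i j. True} \<subseteq> sum lam ` Pow {D. lam D \<noteq> 0}"
    using Lambda_entry_eq_support_sum[OF assms] by auto
  ultimately show ?thesis
    unfolding wt_dist_def by (rule card_le_two_pow_if_subset_image_Pow)
qed

lemma wt_vec_row_le_wt_dist:
  assumes "lam \<in> Lambda W"
  shows "wt_vec (W i) \<le> wt_dist lam"
proof -
  define S where "S = {D. lam D \<noteq> 0}"
  have S_sub: "S \<subseteq> det_channels" using Lambda_support_subset[OF assms] by (simp add: S_def)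
  have "{j. W i j \<noteq> 0} \<subseteq> (\<lambda>D. THE j. D i j = 1) ` S"
  proof
    fix j assume "j \<in> {j. W i j \<noteq> 0}"
    hence "sum lam {D \<in> S. D i j = 1} \<noteq> 0"
      using Lambda_entry_eq_support_sum[OF assms, of i j] by (simp add: S_def)
    hence "{D \<in> S. D i j = 1} \<noteq> {}" by (metis sum.empty)
    then obtain D where D: "D \<in> S" "D i j = 1" by blast
    have "(THE j. D i j = 1) = j"
      using D S_sub det_channel_row_unique by (intro the_equality) blast+
    thus "j \<in> (\<lambda>D. THE j. D i j = 1) ` S" using D(1) by force
  qed
  moreover have "finite S" using finite_Lambda_support[OF assms] by (simp add: S_def)
  ultimately have "card {j. W i j \<noteq> 0} \<le> card ((\<lambda>D. THE j. D i j = 1) ` S)"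
    by (intro card_mono) auto
  also have "\<dots> \<le> card S" using \<open>finite S\<close> by (rule card_image_le)
  finally show ?thesis unfolding wt_vec_def wt_dist_def S_def .
qed

theorem proposition13:
  fixes W :: "'m::finite \<Rightarrow> 'n::finite \<Rightarrow> real"
    and lam :: "('m \<Rightarrow> 'n \<Rightarrow> real) \<Rightarrow> real"
  assumes "channel W"
    and "lam \<in> Lambda W"
  shows "wt_dist lam \<ge>
    max (nat \<lceil>log 2 (real (card {W i j | i j. True}))\<rceil>) (Max (range (\<lambda>i. wt_vec (W i))))"
proof -
  have "finite {W i j | i j. True}"
    using finite_image_set2[of "\<lambda>_. True" "\<lambda>_. True" W] by simp
  hence "0 < card {W i j | i j. True}" by (auto simp: card_gt_0_iff)
  hence "nat \<lceil>log 2 (real (card {W i j | i j. True}))\<rceil> \<le> wt_dist lam"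
    using card_values_le_two_pow_wt_dist[OF assms(2)] by (rule nat_ceiling_log2_le)
  moreover have "Max (range (\<lambda>i. wt_vec (W i))) \<le> wt_dist lam"
    using wt_vec_row_le_wt_dist[OF assms(2)] by (subst Max_le_iff) auto
  ultimately show ?thesis by simp
qed

end
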